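(* Let $r\ge1$, $G\subset\mathbb{Z}_2^r$ a subgroup with $1^r\in G$, $D_G=\Delta G$, $C_G=D_G^\perp$. For every $d\in D_G$, $\Delta^d$ is a maximal isotropic subgroup of $C_G^d=\mathbb{Z}_2^d\cap C_G$.
   Context: $\Delta:\mathbb{Z}_2^r\to\mathbb{Z}_2^{r+r}$, $g\mapsto(g,g)$. For $c\in\mathbb{Z}_2^{r+r}$, $|c|_l$ and $|c|_r$ are the numbers of ones among the first $r$ and last $r$ coordinates, $|c|=|c|_l-|c|_r$; products of codewords are componentwise. For a subgroup $A$, $A^\perp=\{\beta:|\beta a|\in2\mathbb{Z}\ \forall a\in A\}$. For $d\in\mathbb{Z}_2^{r+r}$, $\mathbb{Z}_2^d=\{\alpha:d\alpha=\alpha\}$ and $\Delta^d=\mathbb{Z}_2^d\cap\Delta(\mathbb{Z}_2^r)$. A subgroup $H$ is isotropic if $|\alpha\beta|\in2\mathbb{Z}$ for all $\alpha,\beta\in H$; maximal isotropic means not properly contained in another isotropic subgroup of $C_G^d$. *)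

theory Defs
  imports Main
begin

text \<open>An element of Z_2^n is represented by its support, a subset of
  {0..<n}. Addition is symmetric difference, the componentwise product is
  intersection, the zero vector is the empty set and the all-ones vector is {0..<n}.
  Z_2^(r+r): the first r coordinates are 0..<r, the last r are r..<2r.\<close>

definition vecs :: "nat \<Rightarrow> nat set set" where
  "vecs n = Pow {0..<n}"

definition vadd :: "nat set \<Rightarrow> nat set \<Rightarrow> nat set" where
  "vadd a b = (a - b) \<union> (b - a)"

definition is_subgroup :: "nat \<Rightarrow> nat set set \<Rightarrow> bool" where
  "is_subgroup n H \<longleftrightarrow> H \<subseteq> vecs n \<and> {} \<in> H \<and> (\<forall>a\<in>H. \<forall>b\<in>H. vadd a b \<in> H)"

definition Delta :: "nat \<Rightarrow> nat set \<Rightarrow> nat set" where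
  "Delta r g = g \<union> (\<lambda>i. i + r) ` g"

definition wl :: "nat \<Rightarrow> nat set \<Rightarrow> nat" where
  "wl r c = card (c \<inter> {0..<r})"
definition wr :: "nat \<Rightarrow> nat set \<Rightarrow> nat" where
  "wr r c = card (c \<inter> {r..<r+r})"
definition wt :: "nat \<Rightarrow> nat set \<Rightarrow> int" where
  "wt r c = int (wl r c) - int (wr r c)"

definition perp :: "nat \<Rightarrow> nat set set \<Rightarrow> nat set set" where
  "perp r A = {\<beta> \<in> vecs (r+r). \<forall>a\<in>A. even (wt r (\<beta> \<inter> a))}"

definition Zd :: "nat \<Rightarrow> nat set \<Rightarrow> nat set set" where
  "Zd r d = {\<alpha> \<in> vecs (r+r). d \<inter> \<alpha> = \<alpha>}"

definition Deltad :: "nat \<Rightarrow> nat set \<Rightarrow> nat set set" where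
  "Deltad r d = Zd r d \<inter> Delta r ` vecs r"

definition isotropic :: "nat \<Rightarrow> nat set set \<Rightarrow> bool" where
  "isotropic r H \<longleftrightarrow> (\<forall>\<alpha>\<in>H. \<forall>\<beta>\<in>H. even (wt r (\<alpha> \<inter> \<beta>)))"

definition max_isotropic_in :: "nat \<Rightarrow> nat set set \<Rightarrow> nat set set \<Rightarrow> bool" where
  "max_isotropic_in r H C \<longleftrightarrow>
     is_subgroup (r+r) H \<and> H \<subseteq> C \<and> isotropic r H \<and>
     (\<forall>K. is_subgroup (r+r) K \<and> K \<subseteq> C \<and> isotropic r K \<and> H \<subseteq> K \<longrightarrow> K = H)"

end

theory Submission
  imports Defs
begin

text \<open>Write \<open>d = \<Delta> g\<close>. Then \<open>\<Delta>\<^sup>d = \<Delta>(Pow g)\<close>, and any two diagonal vectors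
  \<open>\<Delta> a, \<Delta> b\<close> satisfy \<open>|\<Delta> a \<Delta> b| = |\<Delta>(a b)| = 0\<close>, so \<open>\<Delta>\<^sup>d\<close> is an isotropic subgroup
  of \<open>C\<^sub>G\<^sup>d\<close>. For maximality, let \<open>\<alpha> \<in> \<BbbZ>\<^sub>2\<^sup>d\<close> be orthogonal to \<open>\<Delta>\<^sup>d\<close>. For \<open>i \<in> g\<close> the
  weight \<open>|\<alpha> \<Delta>{i}|\<close> equals \<open>[i \<in> \<alpha>] - [i + r \<in> \<alpha>]\<close>; it is even only if \<open>\<alpha>\<close> contains
  both or neither of the coordinates \<open>i\<close> and \<open>i + r\<close>. Hence \<open>\<alpha>\<close> is diagonal, \<open>\<alpha> \<in> \<Delta>\<^sup>d\<close>.\<close>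

lemma Delta_inter:
  assumes "a \<subseteq> {0..<r}" and "b \<subseteq> {0..<r}"
  shows "Delta r a \<inter> Delta r b = Delta r (a \<inter> b)"
  using assms unfolding Delta_def by (auto; force)

lemma Delta_vadd:
  assumes "a \<subseteq> {0..<r}" and "b \<subseteq> {0..<r}"
  shows "vadd (Delta r a) (Delta r b) = Delta r (vadd a b)"
  using assms unfolding vadd_def Delta_def by (auto; force)

lemma Delta_in_vecs: "a \<in> vecs r \<Longrightarrow> Delta r a \<in> vecs (r + r)"
  unfolding vecs_def Delta_def by auto

lemma wt_Delta:
  assumes "h \<subseteq> {0..<r}"
  shows "wt r (Delta r h) = 0"
proof -
  have left: "Delta r h \<inter> {0..<r} = h" and right: "Delta r h \<inter> {r..<r+r} = (\<lambda>i. i + r) ` h"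
    using assms unfolding Delta_def by auto
  have "card ((\<lambda>i. i + r) ` h) = card h" by (rule card_image) (auto simp: inj_on_def)
  then show ?thesis unfolding wt_def wl_def wr_def left right by simp
qed

lemma wt_Delta_inter_Delta:
  assumes "a \<in> vecs r" and "b \<in> vecs r"
  shows "wt r (Delta r a \<inter> Delta r b) = 0"
  using assms by (simp add: vecs_def Delta_inter wt_Delta le_infI1)

lemma Delta_image_subset_perp:
  assumes "A \<subseteq> vecs r" and "B \<subseteq> vecs r"
  shows "Delta r ` A \<subseteq> perp r (Delta r ` B)"
proof
  fix \<alpha> assume "\<alpha> \<in> Delta r ` A"
  then obtain a where a: "a \<in> vecs r" "\<alpha> = Delta r a" using assms(1) by auto
  have "wt r (\<alpha> \<inter> Delta r b) = 0" if "b \<in> B" for b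
    using a that assms(2) by (auto intro: wt_Delta_inter_Delta)
  with a show "\<alpha> \<in> perp r (Delta r ` B)"
    unfolding perp_def by (auto intro: Delta_in_vecs)
qed

lemma isotropic_Delta_image:
  assumes "A \<subseteq> vecs r"
  shows "isotropic r (Delta r ` A)"
  using assms unfolding isotropic_def by (auto simp: subset_iff wt_Delta_inter_Delta)

lemma is_subgroup_Delta_Pow:
  assumes "g \<subseteq> {0..<r}"
  shows "is_subgroup (r + r) (Delta r ` Pow g)"
  unfolding is_subgroup_def
proof (intro conjI ballI)
  show "Delta r ` Pow g \<subseteq> vecs (r + r)"
    using assms by (auto simp: vecs_def Delta_def)
  show "{} \<in> Delta r ` Pow g"
    by (rule image_eqI[of _ _ "{}"]) (auto simp: Delta_def)
next
  fix \<alpha> \<beta> assume "\<alpha> \<in> Delta r ` Pow g" "\<beta> \<in> Delta r ` Pow g"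
  then obtain a b where "a \<subseteq> g" "b \<subseteq> g" "\<alpha> = Delta r a" "\<beta> = Delta r b" by auto
  moreover from this have "vadd a b \<subseteq> g" by (auto simp: vadd_def)
  ultimately show "vadd \<alpha> \<beta> \<in> Delta r ` Pow g"
    using assms by (auto simp: Delta_vadd)
qed

lemma Deltad_Delta:
  assumes "g \<subseteq> {0..<r}"
  shows "Deltad r (Delta r g) = Delta r ` Pow g"
proof
  show "Deltad r (Delta r g) \<subseteq> Delta r ` Pow g"
  proof
    fix \<alpha> assume "\<alpha> \<in> Deltad r (Delta r g)"
    then obtain h where h: "h \<subseteq> {0..<r}" "\<alpha> = Delta r h" "\<alpha> \<subseteq> Delta r g"
      unfolding Deltad_def Zd_def vecs_def by auto
    have "h \<subseteq> g"
    proof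
      fix i assume "i \<in> h"
      with h have "i \<in> Delta r g" "i < r" by (auto simp: Delta_def)
      then show "i \<in> g" by (auto simp: Delta_def)
    qed
    with h show "\<alpha> \<in> Delta r ` Pow g" by auto
  qed
  show "Delta r ` Pow g \<subseteq> Deltad r (Delta r g)"
    using assms unfolding Deltad_def Zd_def vecs_def Delta_def by auto
qed

lemma even_wt_inter_Delta_singleton:
  assumes "i < r"
  shows "even (wt r (\<alpha> \<inter> Delta r {i})) \<longleftrightarrow> (i \<in> \<alpha> \<longleftrightarrow> i + r \<in> \<alpha>)"
proof -
  have "\<alpha> \<inter> Delta r {i} \<inter> {0..<r} = \<alpha> \<inter> {i}"
    and "\<alpha> \<inter> Delta r {i} \<inter> {r..<r+r} = \<alpha> \<inter> {i + r}"
    using assms unfolding Delta_def by auto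
  then have "wt r (\<alpha> \<inter> Delta r {i}) = int (card (\<alpha> \<inter> {i})) - int (card (\<alpha> \<inter> {i + r}))"
    unfolding wt_def wl_def wr_def by simp
  then show ?thesis by (cases "i \<in> \<alpha>"; cases "i + r \<in> \<alpha>") auto
qed

lemma eq_Delta_if_balanced:
  assumes "g \<subseteq> {0..<r}" and "\<alpha> \<subseteq> Delta r g"
    and balanced: "\<And>i. i \<in> g \<Longrightarrow> i \<in> \<alpha> \<longleftrightarrow> i + r \<in> \<alpha>"
  shows "\<alpha> = Delta r (\<alpha> \<inter> g)"
proof
  show "\<alpha> \<subseteq> Delta r (\<alpha> \<inter> g)"
  proof
    fix x assume x: "x \<in> \<alpha>"
    with assms(2) consider "x \<in> g" | j where "j \<in> g" "x = j + r"
      unfolding Delta_def by auto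
    then show "x \<in> Delta r (\<alpha> \<inter> g)"
    proof cases
      case 1
      with x show ?thesis by (simp add: Delta_def)
    next
      case 2
      with x balanced have "j \<in> \<alpha> \<inter> g" by simp
      with 2 show ?thesis by (simp add: Delta_def)
    qed
  qed
  show "Delta r (\<alpha> \<inter> g) \<subseteq> \<alpha>"
    using balanced unfolding Delta_def by auto
qed

lemma orthogonal_to_Delta_Pow_imp_diagonal:
  assumes "g \<subseteq> {0..<r}" and "\<alpha> \<in> Zd r (Delta r g)"
    and orth: "\<And>\<beta>. \<beta> \<in> Delta r ` Pow g \<Longrightarrow> even (wt r (\<alpha> \<inter> \<beta>))"
  shows "\<alpha> \<in> Delta r ` Pow g"
proof -
  have "\<alpha> \<subseteq> Delta r g" using assms(2) unfolding Zd_def by auto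
  moreover have "i \<in> \<alpha> \<longleftrightarrow> i + r \<in> \<alpha>" if "i \<in> g" for i
    using orth[of "Delta r {i}"] that assms(1) even_wt_inter_Delta_singleton[of i r \<alpha>] by auto
  ultimately have "\<alpha> = Delta r (\<alpha> \<inter> g)"
    by (rule eq_Delta_if_balanced[OF assms(1)])
  then show ?thesis by blast
qed

theorem mainTheorem12:
  fixes r :: nat and G :: "nat set set" and d :: "nat set"
  assumes "r \<ge> 1"
    and "is_subgroup r G"
    and "{0..<r} \<in> G"
    and "d \<in> Delta r ` G"
  shows "max_isotropic_in r (Deltad r d) (Zd r d \<inter> perp r (Delta r ` G))"
proof -
  obtain g where "g \<in> G" and d: "d = Delta r g" using assms(4) by auto
  have G: "G \<subseteq> vecs r" using assms(2) unfolding is_subgroup_def by simp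
  with \<open>g \<in> G\<close> have g: "g \<subseteq> {0..<r}" by (auto simp: vecs_def)
  have D: "Deltad r d = Delta r ` Pow g" unfolding d by (rule Deltad_Delta[OF g])
  have "Deltad r d \<subseteq> Zd r d" by (simp add: Deltad_def)
  moreover have "Deltad r d \<subseteq> perp r (Delta r ` G)"
    unfolding D using g G by (intro Delta_image_subset_perp) (auto simp: vecs_def)
  moreover have "isotropic r (Deltad r d)"
    unfolding D using g by (intro isotropic_Delta_image) (auto simp: vecs_def)
  moreover have "K \<subseteq> Deltad r d"
    if K: "K \<subseteq> Zd r d" "isotropic r K" "Deltad r d \<subseteq> K" for K
  proof
    fix \<alpha> assume "\<alpha> \<in> K"
    with K(1) have "\<alpha> \<in> Zd r d" by blast
    moreover have "even (wt r (\<alpha> \<inter> \<beta>))" if "\<beta> \<in> Delta r ` Pow g" for \<beta>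
      using K(2,3) \<open>\<alpha> \<in> K\<close> that unfolding D isotropic_def by blast
    ultimately show "\<alpha> \<in> Deltad r d"
      unfolding D by (rule orthogonal_to_Delta_Pow_imp_diagonal[OF g, folded d])
  qed
  ultimately show ?thesis
    unfolding max_isotropic_in_def
    using is_subgroup_Delta_Pow[OF g, folded D] by (meson le_inf_iff subset_antisym)
qed

end
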